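(* Fix $r\in[1,2)$ and assume the hypotheses of the context. Then for all $X,P\in E$, $$\tilde{\mathcal H}(X,P)=\inf_{Q\in\mathcal E}\big\{\langle\langle F(X,Q),P\rangle\rangle+L(X,Q)\big\}.$$
   Context: $H,\Lambda$ real separable Hilbert spaces ($H$: inner product $\langle\cdot,\cdot\rangle$, norm $|\cdot|$; $\Lambda$: norm $|\cdot|_\Lambda$), $\tilde\Lambda\subset\Lambda$ convex. $B\in L(H)$ self-adjoint strictly positive, $|x|_{-1}^2=\langle Bx,x\rangle$. $\mathcal P_r(H),\mathcal M_r,d_r$ and the $|\cdot|_{-1}$-analogues $\mathcal M_{-1,r},d_{-1,r}$. Hypotheses ($C,C_1\ge0$, $C_2,C_3>0$; all $x,y\in H,\mu,\beta\in\mathcal P_2(H),q\in\tilde\Lambda$): $f=f_1+f_2$, $f_1:H\times\mathcal P_2(H)\to H$, $f_2:H\times\mathcal P_2(H)\times\Lambda\to H$, $\langle f(x,\mu,q)-f(y,\beta,q),B(x-y)\rangle\le C(|x-y|_{-1}^2+d_{-1,r}^2(\mu,\beta))$, $|f_1(x,\mu)-f_1(y,\beta)|+|f_2(x,\mu,q)-f_2(y,\beta,q)|\le C(|x-y|+d_r(\mu,\beta))$, $|f(x,\mu,q)|_{-1}\le C(1+|x|_{-1}+\mathcal M_{-1,r}^{1/r}(\mu)+|q|_\Lambda)$, $|f_2(x,\mu,q)|\le C(1+|q|_\Lambda)$; $l=l_1+l_2$ continuous, $|l_1(x,\mu)-l_1(y,\beta)|+|l_2(x,\mu,q)-l_2(y,\beta,q)|\le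 C(|x-y|_{-1}+d_{-1,r}(\mu,\beta))$, $-C_1+C_2|q|_\Lambda^2\le l_2(x,\mu,q)\le C_1+C_3|q|_\Lambda^2$. Lifts: $\Omega=(0,1)$ with Lebesgue measure $\mathcal L^1$, $E=L^2(\Omega;H)$ with inner product $\langle\langle X,Y\rangle\rangle=\int_\Omega\langle X(\omega),Y(\omega)\rangle d\omega$, $\mathcal E=L^2(\Omega;\tilde\Lambda)$; $X_\#\mathcal L^1$ = law of $X$; $F(X,Q)(\omega)=f(X(\omega),X_\#\mathcal L^1,Q(\omega))$, $L(X,Q)=\int_\Omega l(X(\omega),X_\#\mathcal L^1,Q(\omega))d\omega$; $\mathcal H(x,\mu,p)=\inf_{q\in\tilde\Lambda}(\langle f(x,\mu,q),p\rangle+l(x,\mu,q))$ and $\tilde{\mathcal H}(X,P)=\int_\Omega\mathcal H(X(\omega),X_\#\mathcal L^1,P(\omega))d\omega$. *)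

theory Defs
  imports "HOL-Analysis.Analysis" "HOL-Probability.Probability"
begin

definition normB :: "('a::real_inner \<Rightarrow> 'a) \<Rightarrow> 'a \<Rightarrow> real" where
  "normB B x = sqrt (B x \<bullet> x)"

definition P2 :: "'a::{real_normed_vector, second_countable_topology} measure set" where
  "P2 = {\<mu>. prob_space \<mu> \<and> sets \<mu> = sets borel \<and>
              (\<integral>\<^sup>+ x. ennreal ((norm x)\<^sup>2) \<partial>\<mu>) < \<infinity>}"

text \<open>Moment of order r with respect to a gauge c (c = norm gives M_r, c = normB B gives M_{-1,r}).\<close>
definition moment :: "('a \<Rightarrow> real) \<Rightarrow> real \<Rightarrow> 'a measure \<Rightarrow> real" where
  "moment c r \<mu> = enn2real (\<integral>\<^sup>+ x. ennreal (c x powr r) \<partial>\<mu>)"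

definition couplings :: "'a::{real_normed_vector, second_countable_topology} measure \<Rightarrow> 'a measure \<Rightarrow> ('a \<times> 'a) measure set" where
  "couplings \<mu> \<nu> = {\<pi>. prob_space \<pi> \<and> sets \<pi> = sets (borel \<Otimes>\<^sub>M borel) \<and>
                        distr \<pi> borel fst = \<mu> \<and> distr \<pi> borel snd = \<nu>}"

text \<open>Wasserstein distance of order r for the cost given by the gauge c of the difference
  (c = norm gives d_r, c = normB B gives d_{-1,r}).\<close>
definition wass :: "('a::{real_normed_vector, second_countable_topology} \<Rightarrow> real) \<Rightarrow> real \<Rightarrow> 'a measure \<Rightarrow> 'a measure \<Rightarrow> real" where
  "wass c r \<mu> \<nu> =
     enn2real (INF \<pi>\<in>couplings \<mu> \<nu>. \<integral>\<^sup>+ z. ennreal (c (fst z - snd z) powr r) \<partial>\<pi>) powr (1 / r)"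

definition Om :: "real measure" where
  "Om = restrict_space lborel {0<..<1}"

definition law :: "(real \<Rightarrow> 'a::topological_space) \<Rightarrow> 'a measure" where
  "law X = distr Om borel X"

definition L2on :: "'a::{real_normed_vector, second_countable_topology} set \<Rightarrow> (real \<Rightarrow> 'a) set" where
  "L2on S = {X. X \<in> borel_measurable Om \<and> integrable Om (\<lambda>\<omega>. (norm (X \<omega>))\<^sup>2) \<and>
                (\<forall>\<omega>\<in>space Om. X \<omega> \<in> S)}"

definition innerE :: "(real \<Rightarrow> 'a::{real_inner, complete_space, second_countable_topology}) \<Rightarrow> (real \<Rightarrow> 'a) \<Rightarrow> real" where
  "innerE X Y = (\<integral>\<omega>. X \<omega> \<bullet> Y \<omega> \<partial>Om)"

definition liftF :: "('h \<Rightarrow> 'h measure \<Rightarrow> 'l \<Rightarrow> 'h) \<Rightarrow> (real \<Rightarrow> 'h::topological_space) \<Rightarrow> (real \<Rightarrow> 'l) \<Rightarrow> real \<Rightarrow> 'h" where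
  "liftF f X Q = (\<lambda>\<omega>. f (X \<omega>) (law X) (Q \<omega>))"

definition liftL :: "('h \<Rightarrow> 'h measure \<Rightarrow> 'l \<Rightarrow> real) \<Rightarrow> (real \<Rightarrow> 'h::topological_space) \<Rightarrow> (real \<Rightarrow> 'l) \<Rightarrow> real" where
  "liftL l X Q = (\<integral>\<omega>. l (X \<omega>) (law X) (Q \<omega>) \<partial>Om)"

definition Ham :: "('h \<Rightarrow> 'h measure \<Rightarrow> 'l \<Rightarrow> 'h::real_inner) \<Rightarrow> ('h \<Rightarrow> 'h measure \<Rightarrow> 'l \<Rightarrow> real) \<Rightarrow> 'l set
                    \<Rightarrow> 'h \<Rightarrow> 'h measure \<Rightarrow> 'h \<Rightarrow> real" where
  "Ham f l Lam x \<mu> p = (INF q\<in>Lam. f x \<mu> q \<bullet> p + l x \<mu> q)"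

definition HamLift :: "('h \<Rightarrow> 'h measure \<Rightarrow> 'l \<Rightarrow> 'h::{real_inner, topological_space}) \<Rightarrow> ('h \<Rightarrow> 'h measure \<Rightarrow> 'l \<Rightarrow> real) \<Rightarrow> 'l set
                    \<Rightarrow> (real \<Rightarrow> 'h) \<Rightarrow> (real \<Rightarrow> 'h) \<Rightarrow> real" where
  "HamLift f l Lam X P = (\<integral>\<omega>. Ham f l Lam (X \<omega>) (law X) (P \<omega>) \<partial>Om)"

end

theory Submission
  imports Defs
begin

(* Fix mu = law X and put G((x, p), q) = <f(x, mu, q), p> + l(x, mu, q).  This integrand is continuous
   in (x, p), measurable in q, and coercive in q: the quadratic lower bound on l2 beats the linear
   growth of f2.  Since G >= Ham pointwise, integrating gives one inequality.  For the other, the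
   sublevel sets {z. G z q < t} are open, so by Lindelof countably many q_n in Lambda already realise
   the infimum at every z; picking the first index that is e-optimal gives a measurable e-minimiser,
   which is square integrable by coercivity. *)

definition L2_selections ::
    "'a measure \<Rightarrow> 'b::{real_normed_vector, second_countable_topology} set \<Rightarrow> ('a \<Rightarrow> 'b) set" where
  "L2_selections M S =
     {Q. Q \<in> borel_measurable M \<and> integrable M (\<lambda>\<omega>. (norm (Q \<omega>))\<^sup>2) \<and> (\<forall>\<omega>\<in>space M. Q \<omega> \<in> S)}"

lemma L2on_eq_L2_selections: "L2on S = L2_selections Om S"
  unfolding L2on_def L2_selections_def ..

lemma obtain_INF_sequence:
  fixes G :: "'z::second_countable_topology \<Rightarrow> 'q \<Rightarrow> real"
  assumes Lam: "Lam \<noteq> {}"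
    and usc: "\<And>q t. q \<in> Lam \<Longrightarrow> open {z. G z q < t}"
    and bdd: "\<And>z. bdd_below (G z ` Lam)"
  obtains s :: "nat \<Rightarrow> 'q" where "range s \<subseteq> Lam" "\<And>z. (INF n. G z (s n)) = (INF q\<in>Lam. G z q)"
proof -
  have "\<exists>J\<subseteq>Lam. countable J \<and> (\<Union>q\<in>J. {z. G z q < t}) = (\<Union>q\<in>Lam. {z. G z q < t})" for t
  proof -
    have "open U" if "U \<in> (\<lambda>q. {z. G z q < t}) ` Lam" for U
      using that usc by blast
    then obtain \<U> where \<U>: "\<U> \<subseteq> (\<lambda>q. {z. G z q < t}) ` Lam" "countable \<U>"
        "\<Union>\<U> = (\<Union>q\<in>Lam. {z. G z q < t})"
      by (rule Lindelof)
    obtain J where "countable J" "J \<subseteq> Lam" "\<U> = (\<lambda>q. {z. G z q < t}) ` J"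
      using countable_subset_image[THEN iffD1, OF conjI[OF \<U>(2,1)]] by blast
    with \<U>(3) show ?thesis by auto
  qed
  then obtain J where J: "\<And>t. J t \<subseteq> Lam" "\<And>t. countable (J t)"
      "\<And>t. (\<Union>q\<in>J t. {z. G z q < t}) = (\<Union>q\<in>Lam. {z. G z q < t})"
    by metis
  obtain q0 where q0: "q0 \<in> Lam" using Lam by blast
  define S where "S = insert q0 (\<Union>t\<in>\<rat>. J t)"
  have S: "S \<noteq> {}" "countable S" "S \<subseteq> Lam"
    unfolding S_def using J(1,2) q0 countable_rat by auto
  have "(INF q\<in>S. G z q) = (INF q\<in>Lam. G z q)" for z
  proof (rule antisym)
    show "(INF q\<in>Lam. G z q) \<le> (INF q\<in>S. G z q)"
      by (rule cINF_superset_mono[OF S(1) bdd S(3)]) simp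
    show "(INF q\<in>S. G z q) \<le> (INF q\<in>Lam. G z q)"
    proof (rule ccontr)
      assume "\<not> ?thesis"
      then obtain t where t: "t \<in> \<rat>" "(INF q\<in>Lam. G z q) < t" "t < (INF q\<in>S. G z q)"
        using Rats_dense_in_real by (meson not_le)
      then obtain q where "q \<in> Lam" "G z q < t" using cINF_less_iff[OF Lam bdd] by blast
      then obtain q' where q': "q' \<in> J t" "G z q' < t" using J(3)[of t] by blast
      have "q' \<in> S" using q' t(1) unfolding S_def by blast
      then have "(INF q\<in>S. G z q) \<le> G z q'"
        by (rule cINF_lower[OF bdd_below_mono[OF bdd image_mono[OF S(3)]]])
      then show False using q'(2) t(3) by linarith
    qed
  qed
  moreover have "(INF n. G z (from_nat_into S n)) = (INF q\<in>S. G z q)" for z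
    using S(1,2) by (metis image_image range_from_nat_into)
  ultimately show ?thesis
    using that[of "from_nat_into S"] S by simp
qed

lemma borel_measurable_Caratheodory:
  fixes \<phi> :: "'z::{metric_space, second_countable_topology} \<Rightarrow> 'q \<Rightarrow> 'c::metric_space"
  assumes Z: "Z \<in> borel_measurable M" and Q: "Q \<in> measurable M N"
    and meas: "\<And>z. \<phi> z \<in> borel_measurable N"
    and cont: "\<And>\<omega>. \<omega> \<in> space M \<Longrightarrow> continuous_on UNIV (\<lambda>z. \<phi> z (Q \<omega>))"
  shows "(\<lambda>\<omega>. \<phi> (Z \<omega>) (Q \<omega>)) \<in> borel_measurable M"
proof -
  obtain S where S: "\<And>i. simple_function M (S i)" "\<And>\<omega>. \<omega> \<in> space M \<Longrightarrow> (\<lambda>i. S i \<omega>) \<longlonglongrightarrow> Z \<omega>"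
    using borel_measurable_implies_sequence_metric[OF Z, of undefined] by blast
  have "(\<lambda>\<omega>. \<phi> (S i \<omega>) (Q \<omega>)) \<in> borel_measurable M" for i
  proof (rule measurable_compose_countable'[where I="S i ` space M"])
    show "(\<lambda>\<omega>. \<phi> z (Q \<omega>)) \<in> borel_measurable M" for z
      using measurable_comp[OF Q meas] by (simp add: comp_def)
    show "countable (S i ` space M)"
      using S(1)[of i] by (simp add: simple_function_def countable_finite)
    then show "S i \<in> measurable M (count_space (S i ` space M))"
      using S(1)[of i] by (simp add: measurable_count_space_eq_countable simple_function_def)
  qed
  moreover have "(\<lambda>i. \<phi> (S i \<omega>) (Q \<omega>)) \<longlonglongrightarrow> \<phi> (Z \<omega>) (Q \<omega>)" if "\<omega> \<in> space M" for \<omega>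
    by (rule continuous_on_tendsto_compose[OF cont[OF that] S(2)[OF that]]) simp_all
  ultimately show ?thesis
    by (rule borel_measurable_LIMSEQ_metric)
qed

lemma measurable_approx_argmin:
  fixes g :: "nat \<Rightarrow> 'a \<Rightarrow> real"
  assumes g: "\<And>n. g n \<in> borel_measurable M"
    and bdd: "\<And>\<omega>. bdd_below (range (\<lambda>n. g n \<omega>))" and e: "e > 0"
  obtains N where "N \<in> measurable M (count_space UNIV)" "\<And>\<omega>. g (N \<omega>) \<omega> < (INF n. g n \<omega>) + e"
proof -
  define N where "N \<omega> = (LEAST n. g n \<omega> < (INF n. g n \<omega>) + e)" for \<omega>
  have "g (N \<omega>) \<omega> < (INF n. g n \<omega>) + e" for \<omega>
    unfolding N_def
    by (rule LeastI_ex) (use cINF_less_iff[OF UNIV_not_empty bdd[of \<omega>], of "(INF n. g n \<omega>) + e"] e in simp)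
  moreover have "(\<lambda>\<omega>. INF n. g n \<omega>) \<in> borel_measurable M"
    using g by (intro borel_measurable_cINF_real) auto
  then have "N \<in> measurable M (count_space UNIV)"
    unfolding N_def using g by measurable
  ultimately show ?thesis using that by blast
qed

lemma integrable_Caratheodory_L2_selection:
  fixes g :: "'z::{metric_space, second_countable_topology} \<Rightarrow> 'q::{real_normed_vector, second_countable_topology} \<Rightarrow> real"
  assumes Z: "Z \<in> borel_measurable M" and Q: "Q \<in> L2_selections M Lam"
    and cont: "\<And>q. q \<in> Lam \<Longrightarrow> continuous_on UNIV (\<lambda>z. g z q)"
    and meas: "\<And>z. g z \<in> borel_measurable (restrict_space borel Lam)"
    and V: "integrable M (\<lambda>\<omega>. V (Z \<omega>))"
    and bound: "\<And>z q. q \<in> Lam \<Longrightarrow> \<bar>g z q\<bar> \<le> V z + K * (norm q)\<^sup>2"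
  shows "integrable M (\<lambda>\<omega>. g (Z \<omega>) (Q \<omega>))"
proof (rule Bochner_Integration.integrable_bound)
  have Q: "Q \<in> borel_measurable M" "integrable M (\<lambda>\<omega>. (norm (Q \<omega>))\<^sup>2)"
      "\<And>\<omega>. \<omega> \<in> space M \<Longrightarrow> Q \<omega> \<in> Lam"
    using Q unfolding L2_selections_def by auto
  show "integrable M (\<lambda>\<omega>. V (Z \<omega>) + K * (norm (Q \<omega>))\<^sup>2)"
    by (intro Bochner_Integration.integrable_add integrable_mult_right V Q(2))
  have "Q \<in> measurable M (restrict_space borel Lam)"
    using Q(1,3) by (intro measurable_restrict_space2) auto
  then show "(\<lambda>\<omega>. g (Z \<omega>) (Q \<omega>)) \<in> borel_measurable M"
    by (rule borel_measurable_Caratheodory[OF Z _ meas cont[OF Q(3)]])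
  show "AE \<omega> in M. norm (g (Z \<omega>) (Q \<omega>)) \<le> norm (V (Z \<omega>) + K * (norm (Q \<omega>))\<^sup>2)"
  proof (rule AE_I2)
    fix \<omega> assume "\<omega> \<in> space M"
    then have "\<bar>g (Z \<omega>) (Q \<omega>)\<bar> \<le> V (Z \<omega>) + K * (norm (Q \<omega>))\<^sup>2"
      by (rule bound[OF Q(3)])
    then show "norm (g (Z \<omega>) (Q \<omega>)) \<le> norm (V (Z \<omega>) + K * (norm (Q \<omega>))\<^sup>2)"
      by simp
  qed
qed

locale coercive_integrand = finite_measure M
  for M :: "'a measure" +
  fixes Z :: "'a \<Rightarrow> 'z::{metric_space, second_countable_topology}"
    and G :: "'z \<Rightarrow> 'q::{real_normed_vector, second_countable_topology} \<Rightarrow> real"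
    and Lam :: "'q set" and V :: "'z \<Rightarrow> real" and K c :: real
  assumes Z_measurable: "Z \<in> borel_measurable M"
    and Lam_nonempty: "Lam \<noteq> {}"
    and G_continuous: "\<And>q. q \<in> Lam \<Longrightarrow> continuous_on UNIV (\<lambda>z. G z q)"
    and G_measurable: "\<And>z. G z \<in> borel_measurable (restrict_space borel Lam)"
    and V_integrable: "integrable M (\<lambda>\<omega>. V (Z \<omega>))"
    and G_bound: "\<And>z q. q \<in> Lam \<Longrightarrow> \<bar>G z q\<bar> \<le> V z + K * (norm q)\<^sup>2"
    and G_coercive: "\<And>z q. q \<in> Lam \<Longrightarrow> c * (norm q)\<^sup>2 - V z \<le> G z q"
    and c_pos: "c > 0"
begin

definition Ginf :: "'z \<Rightarrow> real" where
  "Ginf z = (INF q\<in>Lam. G z q)"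

lemma G_ge: "q \<in> Lam \<Longrightarrow> - V z \<le> G z q"
  using G_coercive[of q z] c_pos zero_le_power2[of "norm q"] mult_nonneg_nonneg[of c "(norm q)\<^sup>2"]
  by linarith

lemma bdd_below_G: "bdd_below (G z ` Lam)"
  using G_ge by (intro bdd_belowI2)

lemma Ginf_le: "q \<in> Lam \<Longrightarrow> Ginf z \<le> G z q"
  unfolding Ginf_def by (rule cINF_lower[OF bdd_below_G])

lemma Ginf_ge: "- V z \<le> Ginf z"
  unfolding Ginf_def using Lam_nonempty G_ge by (rule cINF_greatest)

lemma obtain_Ginf_sequence:
  obtains s :: "nat \<Rightarrow> 'q" where "range s \<subseteq> Lam" "\<And>z. (INF n. G z (s n)) = Ginf z"
proof -
  have usc: "open {z. G z q < t}" if "q \<in> Lam" for q t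
    using G_continuous[OF that] by (intro open_Collect_less continuous_on_const)
  obtain s :: "nat \<Rightarrow> 'q" where s: "range s \<subseteq> Lam" "\<And>z. (INF n. G z (s n)) = (INF q\<in>Lam. G z q)"
    using obtain_INF_sequence[where G=G, OF Lam_nonempty usc bdd_below_G] by metis
  show ?thesis
    by (rule that[OF s(1)]) (simp add: s(2) Ginf_def)
qed

lemma Ginf_measurable: "Ginf \<in> borel_measurable borel"
proof -
  obtain s :: "nat \<Rightarrow> 'q" where s: "range s \<subseteq> Lam" "\<And>z. (INF n. G z (s n)) = Ginf z"
    using obtain_Ginf_sequence by metis
  have "(\<lambda>z. INF n. G z (s n)) \<in> borel_measurable borel"
    using s(1) G_continuous by (intro borel_measurable_cINF_real borel_measurable_continuous_onI) auto
  then show ?thesis using s(2) by simp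
qed

lemma Ginf_integrable: "integrable M (\<lambda>\<omega>. Ginf (Z \<omega>))"
proof -
  obtain q0 where q0: "q0 \<in> Lam" using Lam_nonempty by blast
  show ?thesis
  proof (rule Bochner_Integration.integrable_bound)
    show "integrable M (\<lambda>\<omega>. \<bar>V (Z \<omega>)\<bar> + \<bar>K * (norm q0)\<^sup>2\<bar>)"
      using V_integrable by auto
    show "(\<lambda>\<omega>. Ginf (Z \<omega>)) \<in> borel_measurable M"
      using measurable_comp[OF Z_measurable Ginf_measurable] by (simp add: comp_def)
    show "AE \<omega> in M. norm (Ginf (Z \<omega>)) \<le> norm (\<bar>V (Z \<omega>)\<bar> + \<bar>K * (norm q0)\<^sup>2\<bar>)"
    proof (rule AE_I2)
      fix \<omega>
      have "- V (Z \<omega>) \<le> Ginf (Z \<omega>)" "Ginf (Z \<omega>) \<le> V (Z \<omega>) + K * (norm q0)\<^sup>2"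
        using Ginf_ge[of "Z \<omega>"] Ginf_le[OF q0, of "Z \<omega>"] G_bound[OF q0, of "Z \<omega>"]
          abs_ge_self[of "G (Z \<omega>) q0"] by linarith+
      then show "norm (Ginf (Z \<omega>)) \<le> norm (\<bar>V (Z \<omega>)\<bar> + \<bar>K * (norm q0)\<^sup>2\<bar>)"
        by simp
    qed
  qed
qed

lemma G_selection_integrable:
  "Q \<in> L2_selections M Lam \<Longrightarrow> integrable M (\<lambda>\<omega>. G (Z \<omega>) (Q \<omega>))"
  by (rule integrable_Caratheodory_L2_selection[OF Z_measurable _ G_continuous G_measurable
        V_integrable G_bound])

lemma integral_Ginf_le:
  assumes Q: "Q \<in> L2_selections M Lam"
  shows "(\<integral>\<omega>. Ginf (Z \<omega>) \<partial>M) \<le> (\<integral>\<omega>. G (Z \<omega>) (Q \<omega>) \<partial>M)"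
  using Q Ginf_le by (intro integral_mono Ginf_integrable G_selection_integrable)
    (auto simp: L2_selections_def)

lemma near_minimizer_in_L2_selections:
  assumes Q: "Q \<in> borel_measurable M" "\<And>\<omega>. Q \<omega> \<in> Lam"
    and near: "\<And>\<omega>. G (Z \<omega>) (Q \<omega>) < Ginf (Z \<omega>) + e"
  shows "Q \<in> L2_selections M Lam"
proof -
  obtain q0 where q0: "q0 \<in> Lam" using Lam_nonempty by blast
  define b where "b \<omega> = (2 * V (Z \<omega>) + K * (norm q0)\<^sup>2 + e) / c" for \<omega>
  have Q_bound: "(norm (Q \<omega>))\<^sup>2 \<le> b \<omega>" for \<omega>
  proof -
    have "c * (norm (Q \<omega>))\<^sup>2 \<le> 2 * V (Z \<omega>) + K * (norm q0)\<^sup>2 + e"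
      using G_coercive[OF Q(2)[of \<omega>], of "Z \<omega>"] near[of \<omega>] Ginf_le[OF q0, of "Z \<omega>"]
        G_bound[OF q0, of "Z \<omega>"] abs_ge_self[of "G (Z \<omega>) q0"] by linarith
    then show ?thesis using c_pos unfolding b_def by (simp add: field_simps)
  qed
  have "integrable M (\<lambda>\<omega>. (norm (Q \<omega>))\<^sup>2)"
  proof (rule Bochner_Integration.integrable_bound)
    show "integrable M b"
      using V_integrable unfolding b_def by simp
    show "(\<lambda>\<omega>. (norm (Q \<omega>))\<^sup>2) \<in> borel_measurable M"
      using Q(1) by measurable
    show "AE \<omega> in M. norm ((norm (Q \<omega>))\<^sup>2) \<le> norm (b \<omega>)"
      using Q_bound order_trans[OF Q_bound abs_ge_self] by (intro AE_I2) simp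
  qed
  then show ?thesis
    using Q unfolding L2_selections_def by blast
qed

lemma approx_minimizing_selection:
  assumes e: "e > 0"
  obtains Q where "Q \<in> L2_selections M Lam" "\<And>\<omega>. G (Z \<omega>) (Q \<omega>) < Ginf (Z \<omega>) + e"
proof -
  obtain s :: "nat \<Rightarrow> 'q" where s: "range s \<subseteq> Lam" "\<And>z. (INF n. G z (s n)) = Ginf z"
    using obtain_Ginf_sequence by metis
  have s_meas: "(\<lambda>\<omega>. G (Z \<omega>) (s n)) \<in> borel_measurable M" for n
    using s(1) G_continuous
    by (intro measurable_compose[OF Z_measurable] borel_measurable_continuous_onI) auto
  have bdd: "bdd_below (range (\<lambda>n. G (Z \<omega>) (s n)))" for \<omega>
    using s(1) G_ge by (intro bdd_belowI2) auto
  obtain N where N: "N \<in> measurable M (count_space UNIV)"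
      "\<And>\<omega>. G (Z \<omega>) (s (N \<omega>)) < (INF n. G (Z \<omega>) (s n)) + e"
    using measurable_approx_argmin[OF s_meas bdd e] by metis
  have "(\<lambda>\<omega>. s (N \<omega>)) \<in> borel_measurable M"
    by (rule measurable_compose[OF N(1)]) simp
  moreover have "s (N \<omega>) \<in> Lam" for \<omega>
    using s(1) by auto
  ultimately show ?thesis
    using near_minimizer_in_L2_selections that N(2) unfolding s(2) by metis
qed

theorem integral_Ginf_eq_INF:
  "(\<integral>\<omega>. Ginf (Z \<omega>) \<partial>M) = (INF Q\<in>L2_selections M Lam. \<integral>\<omega>. G (Z \<omega>) (Q \<omega>) \<partial>M)"
proof (rule antisym)
  obtain q0 where q0: "q0 \<in> Lam" using Lam_nonempty by blast
  then have "(\<lambda>\<omega>. q0) \<in> L2_selections M Lam"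
    unfolding L2_selections_def by auto
  then show "(\<integral>\<omega>. Ginf (Z \<omega>) \<partial>M) \<le> (INF Q\<in>L2_selections M Lam. \<integral>\<omega>. G (Z \<omega>) (Q \<omega>) \<partial>M)"
    using integral_Ginf_le by (intro cINF_greatest) auto
  show "(INF Q\<in>L2_selections M Lam. \<integral>\<omega>. G (Z \<omega>) (Q \<omega>) \<partial>M) \<le> (\<integral>\<omega>. Ginf (Z \<omega>) \<partial>M)"
  proof (rule field_le_epsilon)
    fix e :: real assume e: "e > 0"
    define m where "m = measure M (space M)"
    have m: "m \<ge> 0" unfolding m_def by (rule measure_nonneg)
    then have "e / (m + 1) > 0" using e by simp
    then obtain Q where Q: "Q \<in> L2_selections M Lam"
        "\<And>\<omega>. G (Z \<omega>) (Q \<omega>) < Ginf (Z \<omega>) + e / (m + 1)"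
      using approx_minimizing_selection by metis
    have "(\<integral>\<omega>. G (Z \<omega>) (Q \<omega>) \<partial>M) \<le> (\<integral>\<omega>. Ginf (Z \<omega>) + e / (m + 1) \<partial>M)"
      using Q by (intro integral_mono G_selection_integrable less_imp_le) (auto intro: Ginf_integrable)
    also have "\<dots> = (\<integral>\<omega>. Ginf (Z \<omega>) \<partial>M) + m * (e / (m + 1))"
      using Ginf_integrable by (simp add: m_def)
    also have "\<dots> \<le> (\<integral>\<omega>. Ginf (Z \<omega>) \<partial>M) + e"
      using e m by (simp add: field_simps)
    finally have "(\<integral>\<omega>. G (Z \<omega>) (Q \<omega>) \<partial>M) \<le> (\<integral>\<omega>. Ginf (Z \<omega>) \<partial>M) + e" .
    moreover have "bdd_below ((\<lambda>Q. \<integral>\<omega>. G (Z \<omega>) (Q \<omega>) \<partial>M) ` L2_selections M Lam)"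
      using integral_Ginf_le by (intro bdd_belowI2)
    ultimately show "(INF Q\<in>L2_selections M Lam. \<integral>\<omega>. G (Z \<omega>) (Q \<omega>) \<partial>M) \<le> (\<integral>\<omega>. Ginf (Z \<omega>) \<partial>M) + e"
      using Q(1) by (meson cINF_lower order_trans)
  qed
qed

end

lemma inner_plus_coercive_bounds:
  fixes A c K x p q u v :: real
  assumes A: "0 \<le> A" and c: "0 < c" and nonneg: "0 \<le> x" "0 \<le> p" "0 \<le> q"
    and u: "\<bar>u\<bar> \<le> A * (1 + x + q) * p"
    and v: "\<bar>v\<bar> \<le> A * (1 + x) + K * q\<^sup>2" and v_coercive: "c * q\<^sup>2 - A * (1 + x) \<le> v"
  defines "W \<equiv> (3 * A + A\<^sup>2 / (2 * c)) * (1 + x\<^sup>2 + p\<^sup>2)"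
  shows "\<bar>u\<bar> \<le> W + A * q\<^sup>2" and "\<bar>v\<bar> \<le> W + K * q\<^sup>2" and "c / 2 * q\<^sup>2 - W \<le> u + v"
proof -
  define D where "D = A\<^sup>2 / (2 * c)"
  have prod_le: "a * b \<le> a\<^sup>2 + b\<^sup>2" if "0 \<le> a" "0 \<le> b" for a b :: real
    using sum_squares_bound[of a b] mult_nonneg_nonneg[OF that] by linarith
  have "A * p \<le> A * (1 + p\<^sup>2)"
    using prod_le[of 1 p] nonneg A by (intro mult_left_mono) auto
  then have b1: "A * p \<le> A + A * p\<^sup>2" by (simp add: algebra_simps)
  have "A * (x * p) \<le> A * (x\<^sup>2 + p\<^sup>2)"
    using prod_le[of x p] nonneg A by (intro mult_left_mono) auto
  then have b2: "A * (x * p) \<le> A * x\<^sup>2 + A * p\<^sup>2" by (simp add: algebra_simps)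
  have "A * x \<le> A * (1 + x\<^sup>2)"
    using prod_le[of 1 x] nonneg A by (intro mult_left_mono) auto
  then have b3: "A * x \<le> A + A * x\<^sup>2" by (simp add: algebra_simps)
  have young: "A * (q * p) \<le> c / 2 * q\<^sup>2 + D * p\<^sup>2"
  proof -
    have "2 * (c * q) * (A * p) \<le> (c * q)\<^sup>2 + (A * p)\<^sup>2" by (rule sum_squares_bound)
    then show ?thesis using c unfolding D_def by (simp add: field_simps power2_eq_square)
  qed
  have "A * (q * p) \<le> A * (q\<^sup>2 + p\<^sup>2)"
    using prod_le[of q p] nonneg A by (intro mult_left_mono) auto
  then have b4: "A * (q * p) \<le> A * q\<^sup>2 + A * p\<^sup>2" by (simp add: algebra_simps)
  have nonneg_terms: "0 \<le> A * x\<^sup>2" "0 \<le> A * p\<^sup>2" "0 \<le> D" "0 \<le> D * x\<^sup>2" "0 \<le> D * p\<^sup>2"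
    using A c unfolding D_def by simp_all
  have W_eq: "W = 3 * A + 3 * (A * x\<^sup>2) + 3 * (A * p\<^sup>2) + D + D * x\<^sup>2 + D * p\<^sup>2"
    unfolding W_def D_def[symmetric] by (simp add: algebra_simps)
  have u_eq: "A * (1 + x + q) * p = A * p + A * (x * p) + A * (q * p)"
    by (simp add: algebra_simps)
  have v_eq: "A * (1 + x) = A + A * x"
    by (simp add: algebra_simps)
  show "\<bar>u\<bar> \<le> W + A * q\<^sup>2"
    using u u_eq b1 b2 b4 W_eq nonneg_terms A by linarith
  show "\<bar>v\<bar> \<le> W + K * q\<^sup>2"
    using v v_eq b3 W_eq nonneg_terms A by linarith
  show "c / 2 * q\<^sup>2 - W \<le> u + v"
    using u u_eq v_coercive v_eq b1 b2 b3 young W_eq nonneg_terms A abs_ge_minus_self[of u] by linarith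
qed

locale control_integrand =
  fixes F :: "'h::{real_inner, second_countable_topology} \<Rightarrow> 'l::{real_normed_vector, second_countable_topology} \<Rightarrow> 'h"
    and L :: "'h \<Rightarrow> 'l \<Rightarrow> real" and Lam :: "'l set" and A c K :: real
  assumes A_nonneg: "0 \<le> A" and c_pos: "0 < c"
    and F_continuous: "\<And>q. q \<in> Lam \<Longrightarrow> continuous_on UNIV (\<lambda>x. F x q)"
    and L_continuous: "\<And>q. q \<in> Lam \<Longrightarrow> continuous_on UNIV (\<lambda>x. L x q)"
    and F_measurable: "\<And>x. F x \<in> borel_measurable (restrict_space borel Lam)"
    and L_continuous_on_Lam: "\<And>x. continuous_on Lam (L x)"
    and F_growth: "\<And>x q. q \<in> Lam \<Longrightarrow> norm (F x q) \<le> A * (1 + norm x + norm q)"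
    and L_growth: "\<And>x q. q \<in> Lam \<Longrightarrow> \<bar>L x q\<bar> \<le> A * (1 + norm x) + K * (norm q)\<^sup>2"
    and L_coercive: "\<And>x q. q \<in> Lam \<Longrightarrow> c * (norm q)\<^sup>2 - A * (1 + norm x) \<le> L x q"
begin

definition weight :: "'h \<times> 'h \<Rightarrow> real" where
  "weight z = (3 * A + A\<^sup>2 / (2 * c)) * (1 + (norm (fst z))\<^sup>2 + (norm (snd z))\<^sup>2)"

lemma weight_nonneg: "0 \<le> weight z"
  unfolding weight_def using A_nonneg c_pos by simp

lemma weight_integrable:
  assumes "finite_measure M" "X \<in> L2_selections M UNIV" "P \<in> L2_selections M UNIV"
  shows "integrable M (\<lambda>\<omega>. weight (X \<omega>, P \<omega>))"
proof -
  interpret finite_measure M by fact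
  show ?thesis
    using assms(2,3) unfolding weight_def L2_selections_def by simp
qed

lemma integrand_bounds:
  assumes q: "q \<in> Lam"
  shows "\<bar>F (fst z) q \<bullet> snd z\<bar> \<le> weight z + A * (norm q)\<^sup>2"
    and "\<bar>L (fst z) q\<bar> \<le> weight z + K * (norm q)\<^sup>2"
    and "c / 2 * (norm q)\<^sup>2 - weight z \<le> F (fst z) q \<bullet> snd z + L (fst z) q"
proof -
  have "\<bar>F (fst z) q \<bullet> snd z\<bar> \<le> norm (F (fst z) q) * norm (snd z)"
    by (rule Cauchy_Schwarz_ineq2)
  also have "\<dots> \<le> A * (1 + norm (fst z) + norm q) * norm (snd z)"
    using F_growth[OF q] by (rule mult_right_mono) simp
  finally show "\<bar>F (fst z) q \<bullet> snd z\<bar> \<le> weight z + A * (norm q)\<^sup>2"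
    and "\<bar>L (fst z) q\<bar> \<le> weight z + K * (norm q)\<^sup>2"
    and "c / 2 * (norm q)\<^sup>2 - weight z \<le> F (fst z) q \<bullet> snd z + L (fst z) q"
    using inner_plus_coercive_bounds[OF A_nonneg c_pos norm_ge_zero norm_ge_zero norm_ge_zero
        _ L_growth[OF q] L_coercive[OF q]]
    unfolding weight_def by simp_all
qed

lemma inner_F_continuous: "q \<in> Lam \<Longrightarrow> continuous_on UNIV (\<lambda>z. F (fst z) q \<bullet> snd z)"
  by (intro continuous_on_inner continuous_on_snd continuous_on_id
      continuous_on_compose2[OF F_continuous continuous_on_fst[OF continuous_on_id]]) simp_all

lemma L_fst_continuous: "q \<in> Lam \<Longrightarrow> continuous_on UNIV (\<lambda>z. L (fst z) q)"
  by (rule continuous_on_compose2[OF L_continuous continuous_on_fst[OF continuous_on_id]]) simp_all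

lemma inner_F_measurable: "(\<lambda>q. F (fst z) q \<bullet> snd z) \<in> borel_measurable (restrict_space borel Lam)"
  using F_measurable by measurable

lemma L_fst_measurable: "L (fst z) \<in> borel_measurable (restrict_space borel Lam)"
  by (rule borel_measurable_continuous_on_restrict[OF L_continuous_on_Lam])

lemma coercive_integrand_lift:
  assumes "finite_measure M" "Lam \<noteq> {}" "X \<in> L2_selections M UNIV" "P \<in> L2_selections M UNIV"
  shows "coercive_integrand M (\<lambda>\<omega>. (X \<omega>, P \<omega>)) (\<lambda>z q. F (fst z) q \<bullet> snd z + L (fst z) q) Lam
    (\<lambda>z. 2 * weight z) (A + K) (c / 2)"
  unfolding coercive_integrand_def coercive_integrand_axioms_def
proof (intro conjI allI impI assms(1,2))
  show "(\<lambda>\<omega>. (X \<omega>, P \<omega>)) \<in> borel_measurable M"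
    by (subst borel_prod[symmetric]) (use assms(3,4) in \<open>auto simp: L2_selections_def\<close>)
  show "integrable M (\<lambda>\<omega>. 2 * weight (X \<omega>, P \<omega>))"
    using weight_integrable[OF assms(1,3,4)] by simp
  show "continuous_on UNIV (\<lambda>z. F (fst z) q \<bullet> snd z + L (fst z) q)" if "q \<in> Lam" for q
    using inner_F_continuous[OF that] L_fst_continuous[OF that] by (rule continuous_on_add)
  show "(\<lambda>q. F (fst z) q \<bullet> snd z + L (fst z) q) \<in> borel_measurable (restrict_space borel Lam)" for z
    using inner_F_measurable L_fst_measurable by (rule borel_measurable_add)
  show "\<bar>F (fst z) q \<bullet> snd z + L (fst z) q\<bar> \<le> 2 * weight z + (A + K) * (norm q)\<^sup>2" if "q \<in> Lam" for z q
    using integrand_bounds(1,2)[OF that, of z] by (simp add: algebra_simps)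
  show "c / 2 * (norm q)\<^sup>2 - 2 * weight z \<le> F (fst z) q \<bullet> snd z + L (fst z) q" if "q \<in> Lam" for z q
    using integrand_bounds(3)[OF that, of z] weight_nonneg[of z] by simp
qed (use c_pos in simp)

lemma integral_INF_eq_INF_integral:
  assumes M: "finite_measure M" and Lam: "Lam \<noteq> {}"
    and X: "X \<in> L2_selections M UNIV" and P: "P \<in> L2_selections M UNIV"
  shows "(\<integral>\<omega>. (INF q\<in>Lam. F (X \<omega>) q \<bullet> P \<omega> + L (X \<omega>) q) \<partial>M)
    = (INF Q\<in>L2_selections M Lam. (\<integral>\<omega>. F (X \<omega>) (Q \<omega>) \<bullet> P \<omega> \<partial>M) + (\<integral>\<omega>. L (X \<omega>) (Q \<omega>) \<partial>M))"
proof -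
  interpret coercive_integrand M "\<lambda>\<omega>. (X \<omega>, P \<omega>)" "\<lambda>z q. F (fst z) q \<bullet> snd z + L (fst z) q" Lam
    "\<lambda>z. 2 * weight z" "A + K" "c / 2"
    by (rule coercive_integrand_lift[OF assms])
  have "(\<integral>\<omega>. F (X \<omega>) (Q \<omega>) \<bullet> P \<omega> + L (X \<omega>) (Q \<omega>) \<partial>M)
      = (\<integral>\<omega>. F (X \<omega>) (Q \<omega>) \<bullet> P \<omega> \<partial>M) + (\<integral>\<omega>. L (X \<omega>) (Q \<omega>) \<partial>M)"
    if Q: "Q \<in> L2_selections M Lam" for Q
    using integrable_Caratheodory_L2_selection[OF Z_measurable Q inner_F_continuous inner_F_measurable
        weight_integrable[OF M X P] integrand_bounds(1)]
      integrable_Caratheodory_L2_selection[OF Z_measurable Q L_fst_continuous L_fst_measurable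
        weight_integrable[OF M X P] integrand_bounds(2)]
    by simp
  then show ?thesis
    using integral_Ginf_eq_INF unfolding Ginf_def by (simp cong: INF_cong)
qed

end

lemma continuous_on_add_lipschitz:
  fixes g h :: "'a::real_normed_vector \<Rightarrow> 'b::real_normed_vector"
  assumes "\<And>x y. norm (g x - g y) + norm (h x - h y) \<le> C * norm (x - y)" "0 \<le> C"
  shows "continuous_on UNIV (\<lambda>x. g x + h x)"
proof (rule lipschitz_on_continuous_on[OF lipschitz_onI[OF _ assms(2)]])
  fix x y :: 'a
  have "norm ((g x + h x) - (g y + h y)) \<le> norm (g x - g y) + norm (h x - h y)"
    by (metis add_diff_add norm_triangle_ineq)
  then show "dist (g x + h x) (g y + h y) \<le> C * dist x y"
    using assms(1)[of x y] by (simp add: dist_norm)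
qed

lemma control_integrandI:
  fixes f1 :: "'h::{real_inner, second_countable_topology} \<Rightarrow> 'h"
    and f2 :: "'h \<Rightarrow> 'l::{real_normed_vector, second_countable_topology} \<Rightarrow> 'h"
    and l1 :: "'h \<Rightarrow> real" and l2 :: "'h \<Rightarrow> 'l \<Rightarrow> real"
  assumes q0: "q0 \<in> Lam" and const: "0 \<le> C" "0 \<le> D" "0 \<le> C1" "0 < C2" "0 \<le> C3"
    and f_lip: "\<And>x y q. q \<in> Lam \<Longrightarrow> norm (f1 x - f1 y) + norm (f2 x q - f2 y q) \<le> C * norm (x - y)"
    and f2_bound: "\<And>x q. q \<in> Lam \<Longrightarrow> norm (f2 x q) \<le> C * (1 + norm q)"
    and f2_meas: "\<And>x. f2 x \<in> borel_measurable (restrict_space borel Lam)"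
    and l_lip: "\<And>x y q. q \<in> Lam \<Longrightarrow> \<bar>l1 x - l1 y\<bar> + \<bar>l2 x q - l2 y q\<bar> \<le> D * norm (x - y)"
    and l_cont: "\<And>x. continuous_on Lam (\<lambda>q. l1 x + l2 x q)"
    and l2_bounds: "\<And>x q. q \<in> Lam \<Longrightarrow> - C1 + C2 * (norm q)\<^sup>2 \<le> l2 x q \<and> l2 x q \<le> C1 + C3 * (norm q)\<^sup>2"
  shows "control_integrand (\<lambda>x q. f1 x + f2 x q) (\<lambda>x q. l1 x + l2 x q) Lam
    (norm (f1 0) + \<bar>l1 0\<bar> + C + D + C1) C2 C3"
proof
  let ?A = "norm (f1 0) + \<bar>l1 0\<bar> + C + D + C1"
  have A: "norm (f1 0) + C \<le> ?A" "\<bar>l1 0\<bar> + C1 \<le> ?A" "C \<le> ?A" "D \<le> ?A"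
    using const by simp_all
  have f1_growth: "norm (f1 x) \<le> norm (f1 0) + C * norm x" for x
    using f_lip[OF q0, of x 0, unfolded diff_zero] norm_triangle_ineq2[of "f1 x" "f1 0"]
      norm_ge_zero[of "f2 x q0 - f2 0 q0"] by linarith
  have l1_growth: "\<bar>l1 x\<bar> \<le> \<bar>l1 0\<bar> + D * norm x" for x
    using l_lip[OF q0, of x 0, unfolded diff_zero] abs_ge_zero[of "l2 x q0 - l2 0 q0"] by linarith
  have norm_mono: "C * norm x \<le> ?A * norm x" "D * norm x \<le> ?A * norm x" for x :: 'h
    using A by (simp_all add: mult_right_mono)
  show "continuous_on UNIV (\<lambda>x. f1 x + f2 x q)" if "q \<in> Lam" for q
    using f_lip[OF that] const(1) by (rule continuous_on_add_lipschitz)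
  show "continuous_on UNIV (\<lambda>x. l1 x + l2 x q)" if "q \<in> Lam" for q
    using l_lip[OF that] const(2) by (intro continuous_on_add_lipschitz) auto
  show "(\<lambda>q. f1 x + f2 x q) \<in> borel_measurable (restrict_space borel Lam)" for x
    using f2_meas by measurable
  have distrib: "?A * (1 + norm x) = ?A + ?A * norm x"
      "?A * (1 + norm x + norm q) = ?A + ?A * norm x + ?A * norm q" for x :: 'h and q :: 'l
    by (simp_all add: algebra_simps)
  show "norm (f1 x + f2 x q) \<le> ?A * (1 + norm x + norm q)" if q: "q \<in> Lam" for x q
    using norm_triangle_ineq[of "f1 x" "f2 x q"] f1_growth[of x] f2_bound[OF q, of x] A
      norm_mono[of x] mult_right_mono[OF A(3) norm_ge_zero[of q]] distrib(2)[of x q]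
    by (simp add: algebra_simps)
  show "\<bar>l1 x + l2 x q\<bar> \<le> ?A * (1 + norm x) + C3 * (norm q)\<^sup>2" if q: "q \<in> Lam" for x q
  proof (rule abs_leI)
    have "0 \<le> C2 * (norm q)\<^sup>2" "0 \<le> C3 * (norm q)\<^sup>2"
      using const by simp_all
    then show "l1 x + l2 x q \<le> ?A * (1 + norm x) + C3 * (norm q)\<^sup>2"
      and "- (l1 x + l2 x q) \<le> ?A * (1 + norm x) + C3 * (norm q)\<^sup>2"
      using abs_le_D1[OF l1_growth[of x]] abs_le_D2[OF l1_growth[of x]] l2_bounds[OF q, of x] A
        norm_mono[of x] distrib(1)[of x] by linarith+
  qed
  show "C2 * (norm q)\<^sup>2 - ?A * (1 + norm x) \<le> l1 x + l2 x q" if q: "q \<in> Lam" for x q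
    using abs_le_D2[OF l1_growth[of x]] l2_bounds[OF q, of x] A norm_mono[of x] distrib(1)[of x]
    by linarith
qed (use l_cont const in simp_all)

lemma space_Om: "space Om = {0<..<1}"
  unfolding Om_def by (simp add: space_restrict_space)

lemma prob_space_Om: "prob_space Om"
proof
  show "emeasure Om (space Om) = 1"
    unfolding space_Om unfolding Om_def by (simp add: emeasure_restrict_space)
qed

lemma law_in_P2:
  assumes "X \<in> L2on UNIV"
  shows "law X \<in> P2"
proof -
  have X: "X \<in> borel_measurable Om" "integrable Om (\<lambda>\<omega>. (norm (X \<omega>))\<^sup>2)"
    using assms unfolding L2on_def by auto
  interpret Om: prob_space Om by (rule prob_space_Om)
  have "(\<integral>\<^sup>+ x. ennreal ((norm x)\<^sup>2) \<partial>law X) = (\<integral>\<^sup>+ \<omega>. ennreal ((norm (X \<omega>))\<^sup>2) \<partial>Om)"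
    unfolding law_def by (subst nn_integral_distr) (use X(1) in auto)
  also have "\<dots> < \<infinity>"
    using X(2) by (simp add: integrable_iff_bounded)
  finally show ?thesis
    unfolding P2_def law_def using Om.prob_space_distr[OF X(1)] by simp
qed

lemma wass_self:
  fixes c :: "'a::{real_normed_vector, second_countable_topology} \<Rightarrow> real"
  assumes "prob_space \<mu>" "sets \<mu> = sets borel" "c 0 = 0" and [measurable]: "c \<in> borel_measurable borel"
  shows "wass c r \<mu> \<mu> = 0"
proof -
  define \<pi> where "\<pi> = distr \<mu> (borel \<Otimes>\<^sub>M borel) (\<lambda>x. (x, x))"
  have m: "(\<lambda>x. (x, x)) \<in> measurable \<mu> (borel \<Otimes>\<^sub>M borel)"
    by (intro measurable_Pair measurable_ident_sets) (simp_all add: assms(2))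
  have "\<pi> \<in> couplings \<mu> \<mu>"
    unfolding couplings_def
  proof (intro CollectI conjI)
    show "prob_space \<pi>" unfolding \<pi>_def by (rule prob_space.prob_space_distr[OF assms(1) m])
    show "sets \<pi> = sets (borel \<Otimes>\<^sub>M borel)" unfolding \<pi>_def by simp
    have "distr \<pi> borel fst = distr \<mu> borel (\<lambda>x. x)"
      unfolding \<pi>_def by (subst distr_distr[OF measurable_fst m]) (simp add: comp_def)
    also have "\<dots> = \<mu>" by (rule distr_id2) (use assms(2) in simp)
    finally show "distr \<pi> borel fst = \<mu>" .
    have "distr \<pi> borel snd = distr \<mu> borel (\<lambda>x. x)"
      unfolding \<pi>_def by (subst distr_distr[OF measurable_snd m]) (simp add: comp_def)
    also have "\<dots> = \<mu>" by (rule distr_id2) (use assms(2) in simp)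
    finally show "distr \<pi> borel snd = \<mu>" .
  qed
  moreover have "(\<integral>\<^sup>+ z. ennreal (c (fst z - snd z) powr r) \<partial>\<pi>) = 0"
  proof -
    have mi: "(\<lambda>z. ennreal (c (fst z - snd z) powr r)) \<in> borel_measurable (borel \<Otimes>\<^sub>M borel)" by measurable
    have "(\<integral>\<^sup>+ z. ennreal (c (fst z - snd z) powr r) \<partial>\<pi>) = (\<integral>\<^sup>+ x. ennreal (c (x - x) powr r) \<partial>\<mu>)"
      unfolding \<pi>_def using nn_integral_distr[OF m, of "\<lambda>z. ennreal (c (fst z - snd z) powr r)"] mi by simp
    also have "\<dots> = 0" using assms(3) by simp
    finally show ?thesis .
  qed
  ultimately have "(INF \<pi>\<in>couplings \<mu> \<mu>. \<integral>\<^sup>+ z. ennreal (c (fst z - snd z) powr r) \<partial>\<pi>) \<le> 0"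
    by (intro INF_lower2[of \<pi>]) simp_all
  then have "(INF \<pi>\<in>couplings \<mu> \<mu>. \<integral>\<^sup>+ z. ennreal (c (fst z - snd z) powr r) \<partial>\<pi>) = 0"
    by simp
  then show ?thesis unfolding wass_def by simp
qed

lemma normB_le:
  assumes "bounded_linear B"
  obtains k where "0 \<le> k" "\<And>x. normB B x \<le> k * norm x"
proof -
  obtain K where K: "K > 0" "\<And>x. norm (B x) \<le> norm x * K"
    using bounded_linear.pos_bounded[OF assms] by blast
  have "normB B x \<le> sqrt K * norm x" for x
  proof -
    have "B x \<bullet> x \<le> norm (B x) * norm x" by (rule norm_cauchy_schwarz)
    also have "\<dots> \<le> K * (norm x)\<^sup>2"
      using mult_right_mono[OF K(2)[of x] norm_ge_zero[of x]] by (simp add: power2_eq_square mult_ac)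
    finally have "sqrt (B x \<bullet> x) \<le> sqrt (K * (norm x)\<^sup>2)"
      by (rule real_sqrt_le_mono)
    then show ?thesis
      unfolding normB_def using K(1) by (simp add: real_sqrt_mult)
  qed
  then show ?thesis using that[of "sqrt K"] K(1) by simp
qed

lemma borel_measurable_normB:
  assumes "bounded_linear B"
  shows "normB B \<in> borel_measurable borel"
  unfolding normB_def[abs_def] using linear_continuous_on[OF assms]
  by (intro borel_measurable_continuous_onI continuous_intros) auto

text \<open>With no admissible controls both sides are the junk value \<open>Inf {} :: real\<close>.\<close>

lemma HamLift_no_controls:
  fixes T :: "(real \<Rightarrow> 'l::{real_normed_vector, second_countable_topology}) \<Rightarrow> real"
  shows "HamLift f l {} X P = (INF Q\<in>L2on {}. T Q)"
proof -
  have "L2on ({} :: 'l set) = {}"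
    unfolding L2on_def space_Om by (auto intro: exI[of _ "1/2"])
  then show ?thesis
    by (simp add: HamLift_def Ham_def prob_space.prob_space[OF prob_space_Om])
qed

lemma HamLift_eq_INF_lift:
  fixes f :: "'h::{real_inner, complete_space, second_countable_topology} \<Rightarrow> 'h measure \<Rightarrow>
      'l::{real_normed_vector, second_countable_topology} \<Rightarrow> 'h"
    and l :: "'h \<Rightarrow> 'h measure \<Rightarrow> 'l \<Rightarrow> real"
  assumes "control_integrand (\<lambda>x. f x (law X)) (\<lambda>x. l x (law X)) Lam A c K"
    and Lam: "Lam \<noteq> {}" and X: "X \<in> L2on UNIV" and P: "P \<in> L2on UNIV"
  shows "HamLift f l Lam X P = (INF Q\<in>L2on Lam. innerE (liftF f X Q) P + liftL l X Q)"
proof -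
  interpret control_integrand "\<lambda>x. f x (law X)" "\<lambda>x. l x (law X)" Lam A c K by fact
  interpret Om: prob_space Om by (rule prob_space_Om)
  show ?thesis
    using integral_INF_eq_INF_integral[OF Om.finite_measure_axioms Lam
        X[unfolded L2on_eq_L2_selections] P[unfolded L2on_eq_L2_selections]]
    unfolding HamLift_def Ham_def innerE_def liftF_def liftL_def L2on_eq_L2_selections by simp
qed

theorem proposition4p11:
  fixes B :: "'h::{real_inner, complete_space, second_countable_topology} \<Rightarrow> 'h"
    and Lam :: "'l::{real_inner, complete_space, second_countable_topology} set"
    and f1 :: "'h \<Rightarrow> 'h measure \<Rightarrow> 'h"
    and f2 :: "'h \<Rightarrow> 'h measure \<Rightarrow> 'l \<Rightarrow> 'h"
    and l1 :: "'h \<Rightarrow> 'h measure \<Rightarrow> real"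
    and l2 :: "'h \<Rightarrow> 'h measure \<Rightarrow> 'l \<Rightarrow> real"
    and C C1 C2 C3 r :: real
    and X P :: "real \<Rightarrow> 'h"
  defines "f \<equiv> (\<lambda>x \<mu> q. f1 x \<mu> + f2 x \<mu> q)"
    and "l \<equiv> (\<lambda>x \<mu> q. l1 x \<mu> + l2 x \<mu> q)"
  assumes r: "1 \<le> r" "r < 2"
    and Lam_convex: "convex Lam"
    and B_lin: "bounded_linear B"
    and B_sa: "\<And>x y. B x \<bullet> y = x \<bullet> B y"
    and B_pos: "\<And>x. x \<noteq> 0 \<Longrightarrow> B x \<bullet> x > 0"
    and constants: "C \<ge> 0" "C1 \<ge> 0" "C2 > 0" "C3 > 0"
    and f_mono: "\<And>x y \<mu> \<beta> q. \<mu> \<in> P2 \<Longrightarrow> \<beta> \<in> P2 \<Longrightarrow> q \<in> Lam \<Longrightarrow>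
        (f x \<mu> q - f y \<beta> q) \<bullet> B (x - y)
          \<le> C * ((normB B (x - y))\<^sup>2 + (wass (normB B) r \<mu> \<beta>)\<^sup>2)"
    and f_lip: "\<And>x y \<mu> \<beta> q. \<mu> \<in> P2 \<Longrightarrow> \<beta> \<in> P2 \<Longrightarrow> q \<in> Lam \<Longrightarrow>
        norm (f1 x \<mu> - f1 y \<beta>) + norm (f2 x \<mu> q - f2 y \<beta> q)
          \<le> C * (norm (x - y) + wass norm r \<mu> \<beta>)"
    and f_growth: "\<And>x \<mu> q. \<mu> \<in> P2 \<Longrightarrow> q \<in> Lam \<Longrightarrow>
        normB B (f x \<mu> q) \<le> C * (1 + normB B x + moment (normB B) r \<mu> powr (1 / r) + norm q)"
    and f2_bound: "\<And>x \<mu> q. \<mu> \<in> P2 \<Longrightarrow> q \<in> Lam \<Longrightarrow> norm (f2 x \<mu> q) \<le> C * (1 + norm q)"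
    and f2_meas: "\<And>x \<mu>. \<mu> \<in> P2 \<Longrightarrow> (\<lambda>q. f2 x \<mu> q) \<in> borel_measurable (restrict_space borel Lam)"
    and l_cont: "\<And>xs x \<mu>s \<mu> qs q. (\<And>n. \<mu>s n \<in> P2) \<Longrightarrow> \<mu> \<in> P2 \<Longrightarrow> (\<And>n. qs n \<in> Lam) \<Longrightarrow> q \<in> Lam \<Longrightarrow>
        xs \<longlonglongrightarrow> x \<Longrightarrow> (\<lambda>n. wass norm 2 (\<mu>s n) \<mu>) \<longlonglongrightarrow> 0 \<Longrightarrow> qs \<longlonglongrightarrow> q \<Longrightarrow>
        (\<lambda>n. l (xs n) (\<mu>s n) (qs n)) \<longlonglongrightarrow> l x \<mu> q"
    and l_lip: "\<And>x y \<mu> \<beta> q. \<mu> \<in> P2 \<Longrightarrow> \<beta> \<in> P2 \<Longrightarrow> q \<in> Lam \<Longrightarrow>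
        \<bar>l1 x \<mu> - l1 y \<beta>\<bar> + \<bar>l2 x \<mu> q - l2 y \<beta> q\<bar>
          \<le> C * (normB B (x - y) + wass (normB B) r \<mu> \<beta>)"
    and l2_bounds: "\<And>x \<mu> q. \<mu> \<in> P2 \<Longrightarrow> q \<in> Lam \<Longrightarrow>
        - C1 + C2 * (norm q)\<^sup>2 \<le> l2 x \<mu> q \<and> l2 x \<mu> q \<le> C1 + C3 * (norm q)\<^sup>2"
    and X: "X \<in> L2on UNIV"
    and P: "P \<in> L2on UNIV"
  shows "HamLift f l Lam X P = (INF Q\<in>L2on Lam. innerE (liftF f X Q) P + liftL l X Q)"
proof -
  define \<mu> where "\<mu> = law X"
  have \<mu>: "\<mu> \<in> P2" unfolding \<mu>_def by (rule law_in_P2[OF X])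
  have wass_norm: "wass norm s \<mu> \<mu> = 0" for s
    using \<mu> unfolding P2_def by (intro wass_self) auto
  have wass_normB: "wass (normB B) r \<mu> \<mu> = 0"
    using \<mu> unfolding P2_def by (intro wass_self) (auto simp: normB_def borel_measurable_normB[OF B_lin])
  obtain k where k: "0 \<le> k" "\<And>x. normB B x \<le> k * norm x" using normB_le[OF B_lin] by metis
  show ?thesis
  proof (cases "Lam = {}")
    case True
    then show ?thesis by (simp add: HamLift_no_controls)
  next
    case False
    then obtain q0 where q0: "q0 \<in> Lam" by blast
    have "control_integrand (\<lambda>x q. f1 x \<mu> + f2 x \<mu> q) (\<lambda>x q. l1 x \<mu> + l2 x \<mu> q) Lam
      (norm (f1 0 \<mu>) + \<bar>l1 0 \<mu>\<bar> + C + C * k + C1) C2 C3"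
    proof (rule control_integrandI[OF q0])
      show "norm (f1 x \<mu> - f1 y \<mu>) + norm (f2 x \<mu> q - f2 y \<mu> q) \<le> C * norm (x - y)" if "q \<in> Lam" for x y q
        using f_lip[OF \<mu> \<mu> that, of x y] wass_norm by simp
      show "\<bar>l1 x \<mu> - l1 y \<mu>\<bar> + \<bar>l2 x \<mu> q - l2 y \<mu> q\<bar> \<le> C * k * norm (x - y)" if "q \<in> Lam" for x y q
        using l_lip[OF \<mu> \<mu> that, of x y] wass_normB mult_left_mono[OF k(2)[of "x - y"] constants(1)]
        by (simp add: mult.assoc)
      show "continuous_on Lam (\<lambda>q. l1 x \<mu> + l2 x \<mu> q)" for x
        using l_cont[of "\<lambda>n. \<mu>" \<mu>] \<mu> wass_norm unfolding l_def
        by (intro continuous_on_sequentiallyI) simp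
    qed (use constants k f2_bound[OF \<mu>] f2_meas[OF \<mu>] l2_bounds[OF \<mu>] in auto)
    then show ?thesis
      unfolding f_def l_def \<mu>_def by (rule HamLift_eq_INF_lift[OF _ False X P])
  qed
qed

end
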